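(* For any context $\Gamma$ and type $T$ of the Scalar type system: if $\Gamma\vdash\mathbf 0:T$ then $T\equiv\overline0$.
   Context: Fix a commutative ring $(\mathcal{S},+,\times)$. Terms: $t,r ::= b \mid (t)\,r \mid \mathbf{0} \mid \alpha.t \mid t+r$, basis terms $b ::= x \mid \lambda x\,t$, modulo associativity and commutativity of $+$. Types: $T ::= U \mid \forall X.T \mid \alpha.T \mid \overline{0}$; unit types: $U ::= X \mid U\to T \mid \forall X.U$. Type variables are only substituted by unit types; $(\alpha.T)[U/X]=\alpha.T[U/X]$. Type equivalence $\equiv$ is the least congruence with $\alpha.\overline0\equiv\overline0$, $0.T\equiv\overline0$, $1.T\equiv T$, $\alpha.(\beta.T)\equiv(\alpha\times\beta).T$, $\forall X.\alpha.T\equiv\alpha.\forall X.T$. A context is a set of distinct term variables with unit types. Typing rules: (ax) $\Gamma,x:U\vdash x:U$; ($\equiv$) from $\Gamma\vdash t:T$ and $T\equiv S$ infer $\Gamma\vdash t:S$; ($\to_E$) from $\Gamma\vdash t:\alpha.(U\to T)$ and $\Gamma\vdash r:\beta.U$ infer $\Gamma\vdash (t)\,r:(\alpha\times\beta).T$; ($\to_I$) from $\Gamma,x:U\vdash t:T$ infer $\Gamma\vdash\lambda x\,t:U\to T$; ($\forall_E$) from $\Gamma\vdash t:\forall X.T$ infer $\Gamma\vdash t:T[U/X]$, $U$ unit; ($\forall_I$) from $\Gamma\vdash t:T$ with $X$ not free in $\Gamma$ infer $\Gamma\vdash t:\forall X.T$; ($ax_{\overline0}$) $\Gamma\vdash\mathbf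 0:\overline0$; ($+_I$) from $\Gamma\vdash t:\alpha.T$ and $\Gamma\vdash r:\beta.T$ infer $\Gamma\vdash t+r:(\alpha+\beta).T$; ($s_I$) from $\Gamma\vdash t:T$ infer $\Gamma\vdash\alpha.t:\alpha.T$. *)

theory Defs
  imports Main
begin

datatype 'a tm =
    Var nat
  | Lam nat "'a tm"
  | App "'a tm" "'a tm"
  | Zr
  | Scal 'a "'a tm"
  | Plus "'a tm" "'a tm"

inductive tm_ac :: "'a tm \<Rightarrow> 'a tm \<Rightarrow> bool" where
  ac_refl: "tm_ac t t"
| ac_sym: "tm_ac t r \<Longrightarrow> tm_ac r t"
| ac_trans: "tm_ac t r \<Longrightarrow> tm_ac r s \<Longrightarrow> tm_ac t s"
| ac_comm: "tm_ac (Plus t r) (Plus r t)"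
| ac_assoc: "tm_ac (Plus (Plus t r) s) (Plus t (Plus r s))"
| ac_lam: "tm_ac t r \<Longrightarrow> tm_ac (Lam x t) (Lam x r)"
| ac_app: "tm_ac t t' \<Longrightarrow> tm_ac r r' \<Longrightarrow> tm_ac (App t r) (App t' r')"
| ac_scal: "tm_ac t r \<Longrightarrow> tm_ac (Scal a t) (Scal a r)"
| ac_plus: "tm_ac t t' \<Longrightarrow> tm_ac r r' \<Longrightarrow> tm_ac (Plus t r) (Plus t' r')"

section \<open>Types (type variables as de Bruijn indices)\<close>

datatype 'a ty =
    TVar nat
  | Arr "'a ty" "'a ty"
  | All "'a ty"
  | Sc 'a "'a ty"
  | ZeroT

fun is_unit :: "'a ty \<Rightarrow> bool" and is_ty :: "'a ty \<Rightarrow> bool" where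
  "is_unit (TVar n) = True"
| "is_unit (Arr U T) = (is_unit U \<and> is_ty T)"
| "is_unit (All U) = is_unit U"
| "is_unit (Sc a T) = False"
| "is_unit ZeroT = False"
| "is_ty (TVar n) = True"
| "is_ty (Arr U T) = (is_unit U \<and> is_ty T)"
| "is_ty (All T) = is_ty T"
| "is_ty (Sc a T) = is_ty T"
| "is_ty ZeroT = True"

fun shift :: "nat \<Rightarrow> 'a ty \<Rightarrow> 'a ty" where
  "shift c (TVar n) = (if c \<le> n then TVar (Suc n) else TVar n)"
| "shift c (Arr U T) = Arr (shift c U) (shift c T)"
| "shift c (All T) = All (shift (Suc c) T)"
| "shift c (Sc a T) = Sc a (shift c T)"
| "shift c ZeroT = ZeroT"

fun subst :: "nat \<Rightarrow> 'a ty \<Rightarrow> 'a ty \<Rightarrow> 'a ty" where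
  "subst k U (TVar n) = (if n = k then U else if k < n then TVar (n - 1) else TVar n)"
| "subst k U (Arr V T) = Arr (subst k U V) (subst k U T)"
| "subst k U (All T) = All (subst (Suc k) (shift 0 U) T)"
| "subst k U (Sc a T) = Sc a (subst k U T)"
| "subst k U ZeroT = ZeroT"

inductive ty_eq :: "'a::comm_ring_1 ty \<Rightarrow> 'a ty \<Rightarrow> bool" where
  eq_refl: "is_ty T \<Longrightarrow> ty_eq T T"
| eq_sym: "ty_eq T S \<Longrightarrow> ty_eq S T"
| eq_trans: "ty_eq T S \<Longrightarrow> ty_eq S R \<Longrightarrow> ty_eq T R"
| eq_scal_zero: "ty_eq (Sc a ZeroT) ZeroT"
| eq_zero_scal: "is_ty T \<Longrightarrow> ty_eq (Sc 0 T) ZeroT"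
| eq_one: "is_ty T \<Longrightarrow> ty_eq (Sc 1 T) T"
| eq_mult: "is_ty T \<Longrightarrow> ty_eq (Sc a (Sc b T)) (Sc (a * b) T)"
| eq_all_scal: "is_ty T \<Longrightarrow> ty_eq (All (Sc a T)) (Sc a (All T))"
| eq_cong_arr: "is_unit U \<Longrightarrow> is_unit U' \<Longrightarrow> ty_eq U U' \<Longrightarrow> ty_eq T T'
                 \<Longrightarrow> ty_eq (Arr U T) (Arr U' T')"
| eq_cong_all: "ty_eq T T' \<Longrightarrow> ty_eq (All T) (All T')"
| eq_cong_sc: "ty_eq T T' \<Longrightarrow> ty_eq (Sc a T) (Sc a T')"

type_synonym 'a ctx = "nat \<rightharpoonup> 'a ty"

definition ctx_ok :: "'a ctx \<Rightarrow> bool" where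
  "ctx_ok \<Gamma> \<longleftrightarrow> finite (dom \<Gamma>) \<and> (\<forall>x U. \<Gamma> x = Some U \<longrightarrow> is_unit U)"

definition shift_ctx :: "'a ctx \<Rightarrow> 'a ctx" where
  "shift_ctx \<Gamma> = (\<lambda>x. map_option (shift 0) (\<Gamma> x))"

inductive typing :: "'a::comm_ring_1 ctx \<Rightarrow> 'a tm \<Rightarrow> 'a ty \<Rightarrow> bool" where
  t_ax: "\<Gamma> x = Some U \<Longrightarrow> typing \<Gamma> (Var x) U"
| t_equiv: "typing \<Gamma> t T \<Longrightarrow> ty_eq T S \<Longrightarrow> typing \<Gamma> t S"
| t_arrE: "typing \<Gamma> t (Sc a (Arr U T)) \<Longrightarrow> typing \<Gamma> r (Sc b U)
            \<Longrightarrow> typing \<Gamma> (App t r) (Sc (a * b) T)"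
| t_arrI: "x \<notin> dom \<Gamma> \<Longrightarrow> is_unit U \<Longrightarrow> typing (\<Gamma>(x \<mapsto> U)) t T
            \<Longrightarrow> typing \<Gamma> (Lam x t) (Arr U T)"
| t_allE: "typing \<Gamma> t (All T) \<Longrightarrow> is_unit U \<Longrightarrow> typing \<Gamma> t (subst 0 U T)"
| t_allI: "typing (shift_ctx \<Gamma>) t T \<Longrightarrow> typing \<Gamma> t (All T)"
| t_zero: "typing \<Gamma> Zr ZeroT"
| t_plusI: "typing \<Gamma> t (Sc a T) \<Longrightarrow> typing \<Gamma> r (Sc b T)
            \<Longrightarrow> typing \<Gamma> (Plus t r) (Sc (a + b) T)"
| t_scalI: "typing \<Gamma> t T \<Longrightarrow> typing \<Gamma> (Scal a t) (Sc a T)"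
| t_ac: "typing \<Gamma> t T \<Longrightarrow> tm_ac t t' \<Longrightarrow> typing \<Gamma> t' T"

end

theory Submission
  imports Defs
begin

text \<open>Call \<open>c.T\<close> null if stripping the prefix of quantifiers and scalars of \<open>T\<close>
  either reaches \<open>ZeroT\<close> or, multiplied into \<open>c\<close>, accumulates the scalar \<open>0\<close>.
  Nullness is invariant under type equivalence and preserved by instantiation of a
  quantifier, the only rules besides the axiom that can type \<open>Zr\<close>; so every type of
  \<open>Zr\<close> is null with \<open>c = 1\<close>. Conversely a null \<open>c.T\<close> is equivalent to \<open>ZeroT\<close>, by pushing
  the accumulated scalar out of the quantifiers, where it kills the rest of the type.\<close>

lemmas [trans] = eq_trans

fun scaled_null :: "'a::comm_ring_1 \<Rightarrow> 'a ty \<Rightarrow> bool" where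
  "scaled_null c ZeroT = True"
| "scaled_null c (Sc a T) = scaled_null (c * a) T"
| "scaled_null c (All T) = scaled_null c T"
| "scaled_null c (TVar n) = (c = 0)"
| "scaled_null c (Arr U T) = (c = 0)"

lemma scaled_null_0: "scaled_null 0 T"
  by (induction T) auto

lemma ty_eq_scaled_null_iff:
  "ty_eq A B \<Longrightarrow> scaled_null c A \<longleftrightarrow> scaled_null c B"
  by (induction arbitrary: c rule: ty_eq.induct) (auto simp: scaled_null_0 mult.assoc)

lemma scaled_null_subst: "scaled_null c T \<Longrightarrow> scaled_null c (subst k U T)"
  by (induction T arbitrary: c k U) (auto simp: scaled_null_0)

lemma tm_ac_Zr_iff: "tm_ac t r \<Longrightarrow> t = Zr \<longleftrightarrow> r = Zr"
  by (induction rule: tm_ac.induct) auto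

lemma typing_Zr_scaled_null: "typing \<Gamma> Zr T \<Longrightarrow> scaled_null 1 T"
proof (induction \<Gamma> "Zr :: 'a tm" T rule: typing.induct)
  case (t_equiv \<Gamma> T S)
  then show ?case using ty_eq_scaled_null_iff by blast
next
  case (t_allE \<Gamma> T U)
  then show ?case using scaled_null_subst by auto
next
  case (t_ac \<Gamma> t T)
  then show ?case using tm_ac_Zr_iff by blast
qed auto

lemma ty_eq_All_ZeroT: "ty_eq (All ZeroT) (ZeroT :: 'a::comm_ring_1 ty)"
proof -
  have "ty_eq (All ZeroT) (All (Sc (0::'a) ZeroT))"
    by (rule eq_cong_all, rule eq_sym, rule eq_scal_zero)
  also have "ty_eq \<dots> (Sc 0 (All ZeroT))"
    by (rule eq_all_scal) simp
  also have "ty_eq \<dots> ZeroT"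
    by (rule eq_zero_scal) simp
  finally show ?thesis .
qed

lemma scaled_null_imp_ty_eq:
  "is_ty T \<Longrightarrow> scaled_null c T \<Longrightarrow> ty_eq (Sc c T) ZeroT"
proof (induction T arbitrary: c)
  case (All T)
  then have "ty_eq (Sc c (All T)) (All (Sc c T))"
    by (simp add: eq_sym eq_all_scal)
  also have "ty_eq \<dots> (All ZeroT)"
    using All by (auto intro: eq_cong_all)
  also have "ty_eq \<dots> ZeroT"
    by (rule ty_eq_All_ZeroT)
  finally show ?case .
next
  case (Sc a T)
  then have "ty_eq (Sc c (Sc a T)) (Sc (c * a) T)"
    by (auto intro: eq_mult)
  also have "ty_eq \<dots> ZeroT"
    using Sc by auto
  finally show ?case .
qed (auto intro: eq_zero_scal eq_scal_zero)

theorem mainTheorem15: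
  fixes \<Gamma> :: "'a::comm_ring_1 ctx" and T :: "'a ty"
  assumes "ctx_ok \<Gamma>" and "is_ty T" and "typing \<Gamma> Zr T"
  shows "ty_eq T ZeroT"
proof -
  have "ty_eq T (Sc 1 T)"
    using assms(2) by (simp add: eq_sym eq_one)
  also have "ty_eq \<dots> ZeroT"
    using assms(2,3) by (intro scaled_null_imp_ty_eq typing_Zr_scaled_null)
  finally show ?thesis .
qed

end
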